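(* A pseudo-Kleene lattice $\mathbf A$ is super-paraorthomodular if and only if it satisfies the identity $(x\lor y)\land(x\lor x')\approx x\lor((x\lor y)\land x')$.
   Context: A pseudo-Kleene lattice is an algebra $(A,\land,\lor,{}',0,1)$ that is a bounded lattice with an antitone involution ${}'$ ($x\leq y\Rightarrow y'\leq x'$, $x''=x$) satisfying $x\land x'\leq y\lor y'$. It is super-paraorthomodular if for all $x,y$: (SP1) $x\leq y$ and $x'\land y=(x\land x')\lor(y\land y')$ imply $y\land(x\lor x')=x\lor(y\land y')$; (SP2) $x\leq y$ implies $(x\land x')\lor(y\land y')=(x'\land y)\land(x'\land y)'$. *)

theory Defs
  imports Main
begin

definition pseudo_kleene :: "('a::bounded_lattice \<Rightarrow> 'a) \<Rightarrow> bool" where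
  "pseudo_kleene c \<longleftrightarrow>
     (\<forall>x y. x \<le> y \<longrightarrow> c y \<le> c x) \<and>
     (\<forall>x. c (c x) = x) \<and>
     (\<forall>x y. inf x (c x) \<le> sup y (c y))"

definition super_paraorthomodular :: "('a::bounded_lattice \<Rightarrow> 'a) \<Rightarrow> bool" where
  "super_paraorthomodular c \<longleftrightarrow>
     (\<forall>x y. x \<le> y \<and> inf (c x) y = sup (inf x (c x)) (inf y (c y))
            \<longrightarrow> inf y (sup x (c x)) = sup x (inf y (c y))) \<and>
     (\<forall>x y. x \<le> y \<longrightarrow>
            sup (inf x (c x)) (inf y (c y)) = inf (inf (c x) y) (c (inf (c x) y)))"

end

theory Submission
  imports Defs
begin

text \<open>Restricted to comparable elements x \<le> y, the identity is the modular law
  y \<sqinter> (x \<squnion> x') = x \<squnion> (y \<sqinter> x'), and applying the involution turns it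
  into its dual y \<sqinter> (x \<squnion> y') = x \<squnion> (y \<sqinter> y'); (SP1) and (SP2) follow
  from these two laws by direct computation. Conversely, for x \<le> y put w = y \<sqinter> x',
  z = x \<squnion> w and b = y \<sqinter> (x \<squnion> x'), so that z \<le> b and z' \<sqinter> b = w \<sqinter> w'.
  As w \<sqinter> w' \<le> (w \<sqinter> w')', (SP2) for z \<le> b turns this into the hypothesis
  of (SP1) for z \<le> b, which yields b \<sqinter> (z \<squnion> z') = z. Two further instances
  of (SP2) give z \<sqinter> z' = (x \<sqinter> x') \<squnion> (y \<sqinter> y') \<le> b', hence b \<le> z \<squnion> z'
  and b = z.\<close>

lemma identity_iff_compl_modular:
  fixes c :: "'a::lattice \<Rightarrow> 'a"
  shows "(\<forall>x y. inf (sup x y) (sup x (c x)) = sup x (inf (sup x y) (c x))) \<longleftrightarrow>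
         (\<forall>x y. x \<le> y \<longrightarrow> inf y (sup x (c x)) = sup x (inf y (c x)))"
  by (metis sup.absorb2 sup.cobounded1)

lemma super_paraorthomodularD1:
  assumes "super_paraorthomodular c" and "x \<le> y"
    and "inf (c x) y = sup (inf x (c x)) (inf y (c y))"
  shows "inf y (sup x (c x)) = sup x (inf y (c y))"
  using assms unfolding super_paraorthomodular_def by blast

lemma super_paraorthomodularD2:
  assumes "super_paraorthomodular c" and "x \<le> y"
  shows "sup (inf x (c x)) (inf y (c y)) = inf (inf (c x) y) (c (inf (c x) y))"
  using assms unfolding super_paraorthomodular_def by blast

locale antitone_involution =
  fixes c :: "'a::lattice \<Rightarrow> 'a"
  assumes antitone: "x \<le> y \<Longrightarrow> c y \<le> c x"
    and involution [simp]: "c (c x) = x"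
begin

lemma compl_le_compl_iff [simp]: "c x \<le> c y \<longleftrightarrow> y \<le> x"
  by (metis antitone involution)

lemma compl_sup [simp]: "c (sup x y) = inf (c x) (c y)"
proof (rule antisym)
  show "c (sup x y) \<le> inf (c x) (c y)"
    by simp
  have "sup x y \<le> c (inf (c x) (c y))"
    by (metis compl_le_compl_iff inf.cobounded1 inf.cobounded2 involution sup.boundedI)
  then show "inf (c x) (c y) \<le> c (sup x y)"
    by (metis compl_le_compl_iff involution)
qed

lemma compl_inf [simp]: "c (inf x y) = sup (c x) (c y)"
  by (metis compl_sup involution)

lemma compl_modular_dual:
  assumes modular: "\<And>x y. x \<le> y \<Longrightarrow> inf y (sup x (c x)) = sup x (inf y (c x))"
    and "x \<le> y"
  shows "inf y (sup x (c y)) = sup x (inf y (c y))"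
proof -
  have "inf (c x) (sup (c y) y) = sup (c y) (inf (c x) y)"
    using modular[of "c y" "c x"] \<open>x \<le> y\<close> by simp
  then have "c (inf (c x) (sup (c y) y)) = c (sup (c y) (inf (c x) y))"
    by simp
  then show ?thesis
    by (simp add: inf_commute sup_commute)
qed

end

lemma super_paraorthomodular_if_compl_modular:
  fixes c :: "'a::bounded_lattice \<Rightarrow> 'a"
  assumes "antitone_involution c"
    and modular: "\<And>x y. x \<le> y \<Longrightarrow> inf y (sup x (c x)) = sup x (inf y (c x))"
  shows "super_paraorthomodular c"
proof -
  interpret antitone_involution c by fact
  have dual: "inf y (sup x (c y)) = sup x (inf y (c y))" if "x \<le> y" for x y
    using compl_modular_dual[OF modular that] .
  show ?thesis
    unfolding super_paraorthomodular_def
  proof (intro conjI allI impI)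
    fix x y
    assume "x \<le> y \<and> inf (c x) y = sup (inf x (c x)) (inf y (c y))"
    then have "x \<le> y" and hyp: "inf y (c x) = sup (inf x (c x)) (inf y (c y))"
      by (simp_all add: inf_commute)
    have "inf y (sup x (c x)) = sup x (inf y (c x))"
      using modular \<open>x \<le> y\<close> .
    also have "\<dots> = sup x (inf y (c y))"
      unfolding hyp by (simp add: sup.absorb1 flip: sup.assoc)
    finally show "inf y (sup x (c x)) = sup x (inf y (c y))" .
  next
    fix x y :: 'a
    assume "x \<le> y"
    have "inf (inf (c x) y) (c (inf (c x) y)) = inf (c x) (inf y (sup x (c y)))"
      by (simp add: inf_assoc)
    also have "\<dots> = inf (c x) (sup x (inf y (c y)))"
      using dual \<open>x \<le> y\<close> by simp
    also have "\<dots> = sup (inf y (c y)) (inf (c x) x)"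
    proof -
      have "inf y (c y) \<le> c x"
        using \<open>x \<le> y\<close> by (simp add: le_infI2)
      from dual[OF this] show ?thesis
        by (simp add: sup_commute)
    qed
    finally show "sup (inf x (c x)) (inf y (c y)) = inf (inf (c x) y) (c (inf (c x) y))"
      by (simp add: sup_commute inf_commute)
  qed
qed

lemma super_paraorthomodular_inf_compl_sup:
  fixes c :: "'a::bounded_lattice \<Rightarrow> 'a"
  assumes "antitone_involution c" and sp: "super_paraorthomodular c" and "x \<le> y"
  shows "inf (sup x (inf y (c x))) (c (sup x (inf y (c x)))) =
         sup (inf x (c x)) (inf y (c y))"
proof -
  interpret antitone_involution c by fact
  define w where "w = inf y (c x)"
  have "sup (inf w (c w)) (inf (c x) x) = inf (inf (c w) (c x)) (c (inf (c w) (c x)))"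
    using super_paraorthomodularD2[OF sp, of w "c x"] by (simp add: w_def)
  also have "inf (c w) (c x) = c (sup x w)"
    by (simp add: inf_commute)
  finally have "inf (sup x w) (c (sup x w)) = sup (inf w (c w)) (inf x (c x))"
    by (simp add: inf_commute sup_commute)
  also have "inf w (c w) = sup (inf x (c x)) (inf y (c y))"
    using super_paraorthomodularD2[OF sp \<open>x \<le> y\<close>]
    by (simp add: w_def inf_commute)
  finally show ?thesis
    by (simp add: w_def sup_assoc sup_commute sup_left_commute)
qed

lemma compl_modular_if_super_paraorthomodular:
  fixes c :: "'a::bounded_lattice \<Rightarrow> 'a"
  assumes "antitone_involution c" and sp: "super_paraorthomodular c" and "x \<le> y"
  shows "inf y (sup x (c x)) = sup x (inf y (c x))"
proof -
  interpret antitone_involution c by fact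
  define w where "w = inf y (c x)"
  define z where "z = sup x w"
  define b where "b = inf y (sup x (c x))"
  have "z \<le> b"
    using \<open>x \<le> y\<close> by (simp add: z_def w_def b_def le_infI1 le_supI2 inf.coboundedI2)
  have compl_z_inf_b: "inf (c z) b = inf w (c w)"
    by (rule antisym) (auto simp: z_def w_def b_def intro: le_infI1 le_infI2 le_supI1 le_supI2)
  have "inf (c z) b = sup (inf z (c z)) (inf b (c b))"
  proof -
    have "inf w (c w) \<le> c (inf w (c w))"
      by (simp add: le_supI1 le_supI2 inf.coboundedI1 inf.coboundedI2)
    then show ?thesis
      using super_paraorthomodularD2[OF sp \<open>z \<le> b\<close>]
      by (simp add: compl_z_inf_b inf.absorb1)
  qed
  then have "inf b (sup z (c z)) = sup z (inf b (c b))"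
    by (rule super_paraorthomodularD1[OF sp \<open>z \<le> b\<close>])
  also have "\<dots> = z"
    using \<open>x \<le> y\<close> by (simp add: z_def w_def b_def sup.absorb1 le_supI2 le_infI1 le_infI2)
  finally have "inf b (sup z (c z)) = z" .
  moreover have "b \<le> sup z (c z)"
  proof -
    have "inf z (c z) \<le> c b"
      using super_paraorthomodular_inf_compl_sup[OF assms]
      by (simp add: z_def w_def b_def le_supI1 le_supI2 inf.coboundedI2)
    then show ?thesis
      by (metis compl_le_compl_iff involution compl_inf sup_commute)
  qed
  ultimately have "b = z"
    by (simp add: inf.absorb1)
  then show ?thesis
    by (simp add: b_def z_def w_def)
qed

theorem theorem3p5:
  fixes c :: "'a::bounded_lattice \<Rightarrow> 'a"
  assumes "pseudo_kleene c"
  shows "super_paraorthomodular c \<longleftrightarrow>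
         (\<forall>x y. inf (sup x y) (sup x (c x)) = sup x (inf (sup x y) (c x)))"
proof -
  interpret antitone_involution c
    using assms unfolding pseudo_kleene_def by unfold_locales blast+
  show ?thesis
    unfolding identity_iff_compl_modular
    using compl_modular_if_super_paraorthomodular super_paraorthomodular_if_compl_modular
      antitone_involution_axioms by blast
qed

end
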